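(* Let $q\ge 2$ and $n\ge q+1$. If $\mathcal C\subseteq[q]^n$ is a code with insdel distance $d_I(\mathcal C)=2n-2$, then $|\mathcal C|\le q$.
   Context: $[q]=\{1,\dots,q\}$. For $\mathbf u,\mathbf v\in[q]^n$, the insdel distance $d_I(\mathbf u,\mathbf v)$ is the minimum number of insertions and deletions transforming $\mathbf u$ into $\mathbf v$; equivalently $d_I(\mathbf u,\mathbf v)=2n-2\ell_{\rm LCS}(\mathbf u,\mathbf v)$ where $\ell_{\rm LCS}$ is the length of a longest common subsequence. $d_I(\mathcal C)$ is the minimum insdel distance between distinct codewords. *)

theory Defs
  imports Main "HOL-Library.Sublist"
begin

definition lcs_len :: "'a list \<Rightarrow> 'a list \<Rightarrow> nat" where
  "lcs_len u v = Max {length w | w. subseq w u \<and> subseq w v}"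

definition insdel_dist :: "'a list \<Rightarrow> 'a list \<Rightarrow> nat" where
  "insdel_dist u v = length u + length v - 2 * lcs_len u v"

definition code_insdel_dist :: "'a list set \<Rightarrow> nat" where
  "code_insdel_dist C = Min {insdel_dist u v | u v. u \<in> C \<and> v \<in> C \<and> u \<noteq> v}"

definition words :: "nat \<Rightarrow> nat \<Rightarrow> nat list set" where
  "words q n = {u. length u = n \<and> set u \<subseteq> {1..q}}"

end

theory Submission
  imports Defs
begin

text \<open>Since \<open>n > q\<close>, every codeword repeats some letter, so it contains a subsequence \<open>a a\<close>.
  Two distinct codewords repeating the same letter would have a common subsequence of length 2,
  hence insdel distance at most \<open>2n - 4\<close>. So choosing a repeated letter for each codeword
  is an injection of the code into \<open>[q]\<close>.\<close>

lemma finite_words: "finite (words q n)"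
proof -
  have "words q n = {xs. set xs \<subseteq> {1..q} \<and> length xs = n}"
    unfolding words_def by auto
  then show ?thesis
    using finite_lists_length_eq[of "{1..q}" n] by simp
qed

lemma not_distinct_subseq_double:
  assumes "\<not> distinct u"
  obtains a where "subseq [a, a] u"
proof -
  obtain xs ys zs a where "u = xs @ [a] @ ys @ [a] @ zs"
    using not_distinct_decomp[OF assms] by blast
  then have "subseq [a, a] u"
    by (simp add: subseq_append' list_emb_Cons2 list_emb_append2)
  then show thesis by (rule that)
qed

lemma word_has_double_letter:
  assumes "u \<in> words q n" and "n > q"
  obtains a where "subseq [a, a] u" and "a \<in> {1..q}"
proof -
  have u: "set u \<subseteq> {1..q}" "length u = n"
    using assms(1) unfolding words_def by auto
  then have "card (set u) < length u"
    using card_mono[of "{1..q}" "set u"] assms(2) by simp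
  then have "\<not> distinct u"
    using distinct_card by fastforce
  then obtain a where a: "subseq [a, a] u"
    by (rule not_distinct_subseq_double)
  then have "a \<in> set u"
    by (metis list.set_intros(1) subseq_order.dual_order.trans subseq_singleton_left subseq_Cons')
  with a u(1) show thesis
    using that by blast
qed

lemma length_le_lcs_len:
  assumes "subseq w u" and "subseq w v"
  shows "length w \<le> lcs_len u v"
proof -
  have "finite {length w | w. subseq w u \<and> subseq w v}"
    by (rule finite_subset[of _ "{..length u}"]) (auto dest: list_emb_length)
  then show ?thesis
    unfolding lcs_len_def using assms by (auto intro: Max_ge)
qed

lemma insdel_dist_common_double_le:
  assumes "length u = n" and "length v = n"
    and "subseq [a, a] u" and "subseq [a, a] v"
  shows "insdel_dist u v \<le> 2 * n - 4"
  using length_le_lcs_len[OF assms(3,4)] assms(1,2) unfolding insdel_dist_def by simp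

lemma code_insdel_dist_le:
  assumes "finite C" and "u \<in> C" and "v \<in> C" and "u \<noteq> v"
  shows "code_insdel_dist C \<le> insdel_dist u v"
  unfolding code_insdel_dist_def
proof (rule Min_le)
  have "{insdel_dist u v | u v. u \<in> C \<and> v \<in> C \<and> u \<noteq> v}
      \<subseteq> (\<lambda>(u, v). insdel_dist u v) ` (C \<times> C)"
    by auto
  then show "finite {insdel_dist u v | u v. u \<in> C \<and> v \<in> C \<and> u \<noteq> v}"
    using assms(1) finite_subset by blast
qed (use assms in auto)

theorem lemma3p5:
  fixes q n :: nat and C :: "nat list set"
  assumes "q \<ge> 2" and "n \<ge> q + 1"
    and "C \<subseteq> words q n"
    and "code_insdel_dist C = 2 * n - 2"
  shows "card C \<le> q"
proof -
  define letter where "letter u = (SOME a. subseq [a, a] u \<and> a \<in> {1..q})" for u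
  have letter: "subseq [letter u, letter u] u \<and> letter u \<in> {1..q}" if "u \<in> C" for u
  proof -
    have "u \<in> words q n" "n > q"
      using that assms(2,3) by auto
    then have "\<exists>a. subseq [a, a] u \<and> a \<in> {1..q}"
      by (rule word_has_double_letter) blast
    then show ?thesis
      unfolding letter_def by (rule someI_ex)
  qed
  have "finite C"
    using assms(3) finite_words finite_subset by blast
  have "inj_on letter C"
  proof (rule inj_onI, rule ccontr)
    fix u v assume uv: "u \<in> C" "v \<in> C" "letter u = letter v" "u \<noteq> v"
    have "length u = n" "length v = n"
      using uv assms(3) unfolding words_def by auto
    then have "insdel_dist u v \<le> 2 * n - 4"
      using insdel_dist_common_double_le letter[OF uv(1)] letter[OF uv(2)] uv(3) by metis
    moreover have "2 * n - 2 \<le> insdel_dist u v"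
      using code_insdel_dist_le[OF \<open>finite C\<close> uv(1,2,4)] assms(4) by simp
    ultimately show False
      using assms(1,2) by linarith
  qed
  moreover have "letter ` C \<subseteq> {1..q}"
    using letter by blast
  ultimately have "card C \<le> card {1..q}"
    by (rule card_inj_on_le) simp
  then show ?thesis
    by simp
qed

end
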